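(* Define $V:C\times A\times\Delta\big(S\times\Delta_\nu(C\times A)\big)\to\mathbb{R}$ by $V(c,a,\kappa)=\int v(c,a,s,\mu)\,\mathrm d\kappa(s,\mu)$. Then $V$ is supermodular in $a$ (i.e. $V(c,a\vee a',\kappa)+V(c,a\wedge a',\kappa)\ge V(c,a,\kappa)+V(c,a',\kappa)$), and $V$ has increasing differences in $(a,\kappa)$: whenever $a\succeq a'$ and $\kappa\succeq\lambda$ in $\Delta(S\times\Delta_\nu(C\times A))$, $V(c,a,\kappa)-V(c,a',\kappa)\ge V(c,a,\lambda)-V(c,a',\lambda)$.
   Context: Conventions: $\Delta(X)$ = Borel probability measures on a Polish space $X$ with the weak topology; $\Delta_\nu(X\times Y)$ = those on $X\times Y$ with $X$-marginal $\nu$. Setting: $C$ Polish with Borel probability $\nu$; $A$ compact metrizable with a lattice order $\succeq$ whose join $\vee$ and meet $\wedge$ are continuous; $S$ compact metrizable; $v:C\times A\times S\times\Delta_\nu(C\times A)\to\mathbb{R}$ continuous, supermodular in $a$ ($v(c,a\vee a',s,\mu)+v(c,a\wedge a',s,\mu)\ge v(c,a,s,\mu)+v(c,a',s,\mu)$) and with increasing differences in $(a,\mu)$ (for $a\succeq a'$, $\mu\mapsto v(c,a,s,\mu)-v(c,a',s,\mu)$ is nondecreasing in the stochastic order on $\Delta_\nu(C\times A)$). Stochastic orders: for a Polish space $X$ with a closed partial order $\succeq$, $\mu\succeq\mu'$ in $\Delta(X)$ iff $\int g\,\mathrm d\mu\ge\int g\,\mathrm d\mu'$ for every bounded measurable $\succeq$-nondecreasing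 $g$. On $C\times A$ use $(c,a)\succeq(c',a')$ iff $c=c'$ and $a\succeq a'$, giving the order on $\Delta_\nu(C\times A)$; on $S\times\Delta_\nu(C\times A)$ use $(s,\mu)\succeq(s',\mu')$ iff $s=s'$ and $\mu\succeq\mu'$, giving the stochastic order on $\Delta(S\times\Delta_\nu(C\times A))$. *)

theory Defs
  imports "HOL-Probability.Probability"
begin

definition borel_of :: "'x topology \<Rightarrow> 'x measure" where
  "borel_of X = sigma (topspace X) {U. openin X U}"

definition prob_measures :: "'x measure \<Rightarrow> 'x measure set" where
  "prob_measures M = {\<mu>. prob_space \<mu> \<and> sets \<mu> = sets M}"

definition Delta_nu :: "'c::topological_space measure \<Rightarrow> ('c \<times> 'b::topological_space) measure set" where
  "Delta_nu \<nu> = {\<mu> \<in> prob_measures (borel :: ('c \<times> 'b) measure). distr \<mu> borel fst = \<nu>}"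

definition weak_topology :: "'x::topological_space measure set \<Rightarrow> 'x measure topology" where
  "weak_topology P = topology_generated_by
     {{\<mu> \<in> P. (\<integral>x. g x \<partial>\<mu>) \<in> U} | g U.
        continuous_on UNIV g \<and> bounded (range g) \<and> open (U :: real set)}"

text \<open>Stochastic order: mu is stochastically larger than mu' w.r.t. the order R
  (R x y means x is above y) on the measurable space M.\<close>
definition stoch_ge :: "'x measure \<Rightarrow> ('x \<Rightarrow> 'x \<Rightarrow> bool) \<Rightarrow> 'x measure \<Rightarrow> 'x measure \<Rightarrow> bool" where
  "stoch_ge M R \<mu> \<mu>' \<longleftrightarrow>
     (\<forall>g :: 'x \<Rightarrow> real. g \<in> borel_measurable M \<longrightarrow>
        bounded (g ` space M) \<and> (\<forall>x\<in>space M. \<forall>y\<in>space M. R x y \<longrightarrow> g y \<le> g x)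
        \<longrightarrow> (\<integral>x. g x \<partial>\<mu>') \<le> (\<integral>x. g x \<partial>\<mu>))"

definition ca_ge :: "('c \<times> 'a::order) \<Rightarrow> ('c \<times> 'a) \<Rightarrow> bool" where
  "ca_ge p q \<longleftrightarrow> fst p = fst q \<and> snd q \<le> snd p"

definition sm_ge :: "('s \<times> ('c::topological_space \<times> 'a::{order,topological_space}) measure)
                     \<Rightarrow> ('s \<times> ('c \<times> 'a) measure) \<Rightarrow> bool" where
  "sm_ge p q \<longleftrightarrow> fst p = fst q \<and> stoch_ge borel ca_ge (snd p) (snd q)"

definition WT :: "'c::topological_space measure \<Rightarrow> ('c \<times> 'b::topological_space) measure topology" where
  "WT \<nu> = weak_topology (Delta_nu \<nu>)"

definition MS :: "'c::topological_space measure \<Rightarrow> ('s::topological_space \<times> ('c \<times> 'b::topological_space) measure) measure" where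
  "MS \<nu> = borel_of (prod_topology euclidean (WT \<nu>))"

definition Vint :: "('c \<Rightarrow> 'a \<Rightarrow> 's \<Rightarrow> 'm \<Rightarrow> real) \<Rightarrow> 'c \<Rightarrow> 'a \<Rightarrow> ('s \<times> 'm) measure \<Rightarrow> real" where
  "Vint v c a \<kappa> = (\<integral>p. v c a (fst p) (snd p) \<partial>\<kappa>)"

end

theory Submission
  imports Defs "HOL-Library.Diagonal_Subsequence"
begin

(* Supermodularity in a and increasing differences in (a, mu) are pointwise inequalities
   for v, and they survive integration against kappa: the first by monotonicity of the
   integral, the second because for a' \<le> a the difference v(c,a,s,mu) - v(c,a',s,mu) is a
   bounded continuous increasing function of (s, mu), hence an admissible test function for
   the stochastic order on S \<times> Delta_nu(C \<times> A).  What needs work is boundedness, which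
   makes all these integrals exist: Delta_nu(C \<times> A) is sequentially compact in the weak
   topology.  Its members are uniformly tight, since nu is tight on the Polish space C and
   A is compact, so Prokhorov's theorem yields weakly convergent subsequences, and the
   C-marginal nu passes to weak limits because finite Borel measures on a metric space are
   determined by their integrals of bounded continuous functions.  Hence v(c,a,-,-) is
   continuous on a sequentially compact space and therefore bounded. *)

section \<open>Sequentially compact spaces\<close>

definition seq_compact_space :: "'a topology \<Rightarrow> bool" where
  "seq_compact_space X \<longleftrightarrow>
     (\<forall>\<sigma>::nat \<Rightarrow> 'a. range \<sigma> \<subseteq> topspace X \<longrightarrow>
        (\<exists>l r. l \<in> topspace X \<and> strict_mono r \<and> limitin X (\<sigma> \<circ> r) l sequentially))"

lemma seq_compact_spaceD:
  fixes \<sigma> :: "nat \<Rightarrow> 'a"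
  assumes "seq_compact_space X" "\<And>n. \<sigma> n \<in> topspace X"
  shows "\<exists>l r. l \<in> topspace X \<and> strict_mono r \<and> limitin X (\<sigma> \<circ> r) l sequentially"
  using assms(1)[unfolded seq_compact_space_def, rule_format, of \<sigma>] assms(2) by auto

lemma seq_compact_space_euclidean:
  assumes "compact (UNIV :: 'a::metric_space set)"
  shows "seq_compact_space (euclidean :: 'a topology)"
  unfolding seq_compact_space_def limitin_canonical_iff topspace_euclidean
proof (intro allI impI)
  fix \<sigma> :: "nat \<Rightarrow> 'a"
  obtain l r where "strict_mono r" "(\<sigma> \<circ> r) \<longlonglongrightarrow> l"
    using seq_compactE[OF compact_imp_seq_compact[OF assms], of \<sigma>] by blast
  then show "\<exists>l r. l \<in> UNIV \<and> strict_mono r \<and> (\<sigma> \<circ> r) \<longlonglongrightarrow> l"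
    by blast
qed

lemma seq_compact_space_prod_topology:
  assumes X: "seq_compact_space X" and Y: "seq_compact_space Y"
  shows "seq_compact_space (prod_topology X Y)"
  unfolding seq_compact_space_def
proof (intro allI impI)
  fix \<sigma> :: "nat \<Rightarrow> 'a \<times> 'b"
  assume "range \<sigma> \<subseteq> topspace (prod_topology X Y)"
  then have "\<sigma> n \<in> topspace X \<times> topspace Y" for n
    by auto
  then have \<sigma>: "\<And>n. fst (\<sigma> n) \<in> topspace X" "\<And>n. snd (\<sigma> n) \<in> topspace Y"
    by (auto simp: mem_Times_iff)
  have "\<exists>l1 r1. l1 \<in> topspace X \<and> strict_mono r1 \<and> limitin X (fst \<circ> \<sigma> \<circ> r1) l1 sequentially"
    by (rule seq_compact_spaceD[OF X]) (simp add: \<sigma>)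
  then obtain l1 r1 where l1: "l1 \<in> topspace X" "strict_mono r1" "limitin X (fst \<circ> \<sigma> \<circ> r1) l1 sequentially"
    by blast
  have "\<exists>l2 r2. l2 \<in> topspace Y \<and> strict_mono r2 \<and> limitin Y (snd \<circ> \<sigma> \<circ> r1 \<circ> r2) l2 sequentially"
    by (rule seq_compact_spaceD[OF Y]) (simp add: \<sigma>)
  then obtain l2 r2 where l2: "l2 \<in> topspace Y" "strict_mono r2" "limitin Y (snd \<circ> \<sigma> \<circ> r1 \<circ> r2) l2 sequentially"
    by blast
  have "limitin X (fst \<circ> \<sigma> \<circ> r1 \<circ> r2) l1 sequentially"
    using limitin_subsequence[OF l2(2) l1(3)] .
  then have "limitin (prod_topology X Y) (\<sigma> \<circ> (r1 \<circ> r2)) (l1, l2) sequentially"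
    using l2(3) by (simp add: limitin_pairwise o_assoc)
  then show "\<exists>l r. l \<in> topspace (prod_topology X Y) \<and> strict_mono r \<and>
               limitin (prod_topology X Y) (\<sigma> \<circ> r) l sequentially"
    using l1(1,2) l2(1,2) by (intro exI[of _ "(l1, l2)"] exI[of _ "r1 \<circ> r2"]) (simp add: strict_mono_o)
qed

lemma seq_compact_space_imp_bounded:
  fixes f :: "'a \<Rightarrow> real"
  assumes X: "seq_compact_space X" and f: "continuous_map X euclideanreal f"
  shows "bounded (f ` topspace X)"
proof -
  have "\<exists>B. \<forall>x\<in>topspace X. \<bar>f x\<bar> \<le> B"
  proof (rule ccontr)
    assume "\<nexists>B. \<forall>x\<in>topspace X. \<bar>f x\<bar> \<le> B"
    then have "\<forall>n::nat. \<exists>x. x \<in> topspace X \<and> real n < \<bar>f x\<bar>"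
      by (auto simp: not_le)
    from choice[OF this] obtain \<sigma> where "\<forall>n. \<sigma> n \<in> topspace X \<and> real n < \<bar>f (\<sigma> n)\<bar>"
      by blast
    then have \<sigma>: "\<And>n. \<sigma> n \<in> topspace X" "\<And>n. real n < \<bar>f (\<sigma> n)\<bar>"
      by auto
    have "\<exists>l r. l \<in> topspace X \<and> strict_mono r \<and> limitin X (\<sigma> \<circ> r) l sequentially"
      by (rule seq_compact_spaceD[OF X \<sigma>(1)])
    then obtain l r where lr: "l \<in> topspace X" "strict_mono r" "limitin X (\<sigma> \<circ> r) l sequentially"
      by blast
    have "(\<lambda>n. f (\<sigma> (r n))) \<longlonglongrightarrow> f l"
      using continuous_map_limit[OF f lr(3)] by (simp add: o_def)
    then have "Bseq (\<lambda>n. f (\<sigma> (r n)))"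
      by (rule convergent_imp_Bseq[OF convergentI])
    then obtain C where C: "\<And>n. \<bar>f (\<sigma> (r n))\<bar> \<le> C"
      unfolding Bseq_def by auto
    obtain n :: nat where "C < real n"
      using reals_Archimedean2 by blast
    moreover have "real n \<le> real (r n)"
      using seq_suble[OF lr(2)] by simp
    ultimately show False
      using \<sigma>(2)[of "r n"] C[of n] by linarith
  qed
  then show ?thesis
    by (simp add: bounded_iff)
qed

section \<open>Borel probability measures and weak convergence\<close>

lemma space_prob_measures_borel: "P \<in> prob_measures borel \<Longrightarrow> space P = UNIV"
  unfolding prob_measures_def by (metis (mono_tags) mem_Collect_eq sets_eq_imp_space_eq space_borel)

lemma integrable_bounded_borel:
  fixes g :: "'x::topological_space \<Rightarrow> real"
  assumes P: "P \<in> prob_measures borel" and g: "g \<in> borel_measurable borel" "\<And>x. \<bar>g x\<bar> \<le> B"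
  shows "integrable P g"
proof -
  interpret prob_space P
    using P by (simp add: prob_measures_def)
  have "measurable P borel = measurable borel (borel :: real measure)"
    using P by (intro measurable_cong_sets) (simp_all add: prob_measures_def)
  then show ?thesis
    using g by (intro integrable_const_bound[where B=B]) auto
qed

lemma card_less_real_bounds:
  fixes t :: real
  assumes "0 \<le> t" "t \<le> real N"
  shows "t - 1 \<le> real (card {i\<in>{1..N}. real i < t})" "real (card {i\<in>{1..N}. real i < t}) \<le> t"
proof -
  have "t - 1 \<le> real (card {i\<in>{1..N}. real i < t}) \<and> real (card {i\<in>{1..N}. real i < t}) \<le> t"
  proof (cases "t = 0")
    case False
    define m where "m = nat (\<lceil>t\<rceil> - 1)"
    have m: "real m = real_of_int \<lceil>t\<rceil> - 1"
      using False assms(1) unfolding m_def by (simp add: ceiling_le_zero not_le)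
    have "{i\<in>{1..N}. real i < t} = {1..m}"
    proof safe
      fix i assume "i \<in> {1..N}" "real i < t"
      moreover from \<open>real i < t\<close> have "int i < \<lceil>t\<rceil>"
        by (simp add: less_ceiling_iff)
      ultimately show "i \<in> {1..m}"
        unfolding m_def by auto
    next
      fix i assume i: "i \<in> {1..m}"
      then have "int i < \<lceil>t\<rceil>"
        unfolding m_def by auto
      then show "real i < t"
        by (simp add: less_ceiling_iff)
      then show "i \<in> {1..N}"
        using i assms(2) by auto
    qed
    then show ?thesis
      using m ceiling_correct[of t] by simp
  qed simp
  then show "t - 1 \<le> real (card {i\<in>{1..N}. real i < t})" "real (card {i\<in>{1..N}. real i < t}) \<le> t"
    by auto
qed

lemma indicator_levels_bounds:
  fixes g :: "'x \<Rightarrow> real" and k :: nat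
  assumes "0 < k" "0 \<le> g x" "g x \<le> 1"
  defines "s \<equiv> (\<Sum>i\<in>{1..k}. indicator {y. real i / real k < g y} x) / real k"
  shows "0 \<le> s" "s \<le> g x" "g x \<le> s + 1 / real k"
proof -
  have "(\<Sum>i\<in>{1..k}. indicator {y. real i / real k < g y} x)
        = (\<Sum>i\<in>{1..k}. of_bool (real i < real k * g x) :: real)"
    using assms(1) by (intro sum.cong) (auto simp: indicator_def pos_divide_less_eq mult.commute)
  also have "\<dots> = real (card {i\<in>{1..k}. real i < real k * g x})"
    by (simp add: sum_of_bool_eq Int_def conj_commute)
  finally have s: "s = real (card {i\<in>{1..k}. real i < real k * g x}) / real k"
    unfolding s_def by simp
  have "0 \<le> real k * g x" "real k * g x \<le> real k"
    using assms(1-3) by auto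
  from card_less_real_bounds[OF this] assms(1) show "s \<le> g x" "g x \<le> s + 1 / real k"
    by (auto simp: s field_simps)
  show "0 \<le> s"
    by (simp add: s)
qed

lemma measure_space_prob_measures: "P \<in> prob_measures M \<Longrightarrow> measure P (space P) = 1"
  by (simp add: prob_measures_def prob_space.prob_space)

lemma integral_sum_indicator:
  fixes G :: "'i \<Rightarrow> 'x::topological_space set"
  assumes P: "P \<in> prob_measures borel" and G: "\<And>i. G i \<in> sets borel"
  shows "(\<integral>x. (\<Sum>i\<in>I. indicator (G i) x) \<partial>P) = (\<Sum>i\<in>I. measure P (G i))"
proof -
  have "(\<integral>x. (\<Sum>i\<in>I. indicator (G i) x) \<partial>P) = (\<Sum>i\<in>I. (\<integral>x. indicator (G i) x \<partial>P) :: real)"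
    using G by (intro Bochner_Integration.integral_sum integrable_bounded_borel[OF P, where B=1]) auto
  then show ?thesis
    using space_prob_measures_borel[OF P] by simp
qed

lemma eventually_integral_gt_if_liminf_open_unit:
  fixes M :: "nat \<Rightarrow> 'x::topological_space measure" and g :: "'x \<Rightarrow> real"
  assumes M: "\<And>n. M n \<in> prob_measures borel" and \<mu>: "\<mu> \<in> prob_measures borel"
    and open_liminf: "\<And>G d. open G \<Longrightarrow> 0 < d \<Longrightarrow>
                        eventually (\<lambda>n. measure \<mu> G - d < measure (M n) G) sequentially"
    and g: "continuous_on UNIV g" "\<And>x. 0 \<le> g x" "\<And>x. g x \<le> 1" and e: "0 < e"
  shows "eventually (\<lambda>n. (\<integral>x. g x \<partial>\<mu>) - e < (\<integral>x. g x \<partial>M n)) sequentially"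
proof -
  obtain k0 where "inverse (real (Suc k0)) < e / 2"
    using reals_Archimedean e by (metis half_gt_zero)
  then obtain k :: nat where k: "0 < k" "1 / real k < e / 2"
    by (intro that[of "Suc k0"]) (auto simp: inverse_eq_divide)
  \<comment> \<open>Approximate g from below, uniformly within 1/k, by a combination of indicators of open sets.\<close>
  define G where "G i = {x. real i / real k < g x}" for i :: nat
  define s where "s x = (\<Sum>i\<in>{1..k}. indicator (G i) x) / real k" for x
  have s_bounds: "0 \<le> s x" "s x \<le> g x" "g x \<le> s x + 1 / real k" for x
    unfolding s_def G_def using indicator_levels_bounds[where g=g and x=x, OF k(1) g(2,3)] by auto
  have G_open: "open (G i)" for i
    unfolding G_def by (intro open_Collect_less continuous_on_const g(1))
  then have G_borel: "G i \<in> sets borel" for i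
    by auto
  have g_meas: "g \<in> borel_measurable borel"
    using g(1) by (rule borel_measurable_continuous_onI)
  have s_meas: "s \<in> borel_measurable borel"
    unfolding s_def using G_borel by measurable
  have integrable: "integrable P g" "integrable P s" "integrable P (\<lambda>_. 1 / real k)"
    if "P \<in> prob_measures borel" for P
    using that g_meas s_meas g(2,3) s_bounds order_trans[OF s_bounds(2) g(3)] k(1)
    by (auto intro!: integrable_bounded_borel[where B=1])
  have integral_s: "(\<integral>x. s x \<partial>P) = (\<Sum>i\<in>{1..k}. measure P (G i)) / real k"
    if "P \<in> prob_measures borel" for P
    using integral_sum_indicator[where G=G, OF that G_borel] by (simp add: s_def)
  have "eventually (\<lambda>n. \<forall>i\<in>{1..k}. measure \<mu> (G i) - e / 2 < measure (M n) (G i)) sequentially"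
    using G_open e by (intro eventually_ball_finite ballI open_liminf) auto
  then show ?thesis
  proof (rule eventually_mono)
    fix n assume "\<forall>i\<in>{1..k}. measure \<mu> (G i) - e / 2 < measure (M n) (G i)"
    then have n: "measure \<mu> (G i) \<le> measure (M n) (G i) + e / 2" if "i \<in> {1..k}" for i
      using that by fastforce
    have "(\<integral>x. g x \<partial>\<mu>) \<le> (\<integral>x. s x + 1 / real k \<partial>\<mu>)"
      using \<mu> s_bounds by (intro integral_mono Bochner_Integration.integrable_add integrable) auto
    also have "\<dots> = (\<Sum>i\<in>{1..k}. measure \<mu> (G i)) / real k + 1 / real k"
      using \<mu> by (simp add: integrable integral_s measure_space_prob_measures)
    also have "\<dots> \<le> (\<Sum>i\<in>{1..k}. measure (M n) (G i) + e / 2) / real k + 1 / real k"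
      using n k(1) by (intro add_right_mono divide_right_mono sum_mono) auto
    also have "\<dots> = (\<integral>x. s x \<partial>M n) + e / 2 + 1 / real k"
      using M k(1) by (simp add: integral_s sum.distrib add_divide_distrib)
    also have "(\<integral>x. s x \<partial>M n) \<le> (\<integral>x. g x \<partial>M n)"
      using M s_bounds by (intro integral_mono integrable) auto
    finally show "(\<integral>x. g x \<partial>\<mu>) - e < (\<integral>x. g x \<partial>M n)"
      using k(2) by linarith
  qed
qed

lemma eventually_integral_gt_if_liminf_open:
  fixes M :: "nat \<Rightarrow> 'x::topological_space measure" and g :: "'x \<Rightarrow> real"
  assumes M: "\<And>n. M n \<in> prob_measures borel" and \<mu>: "\<mu> \<in> prob_measures borel"
    and open_liminf: "\<And>G d. open G \<Longrightarrow> 0 < d \<Longrightarrow>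
                        eventually (\<lambda>n. measure \<mu> G - d < measure (M n) G) sequentially"
    and g: "continuous_on UNIV g" "\<And>x. \<bar>g x\<bar> \<le> B" and B: "0 < B" and e: "0 < e"
  shows "eventually (\<lambda>n. (\<integral>x. g x \<partial>\<mu>) - e < (\<integral>x. g x \<partial>M n)) sequentially"
proof -
  define h where "h x = (g x + B) / (2 * B)" for x
  have "continuous_on UNIV h"
    unfolding h_def using g(1) B by (intro continuous_intros) auto
  moreover have "0 \<le> h x" "h x \<le> 1" for x
    unfolding h_def using g(2)[of x] B by (auto simp: field_simps)
  ultimately have "eventually (\<lambda>n. (\<integral>x. h x \<partial>\<mu>) - e / (2 * B) < (\<integral>x. h x \<partial>M n)) sequentially"
    using e B by (intro eventually_integral_gt_if_liminf_open_unit[OF M \<mu> open_liminf]) auto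
  moreover have "(\<integral>x. h x \<partial>P) = ((\<integral>x. g x \<partial>P) + B) / (2 * B)" if P: "P \<in> prob_measures borel" for P
  proof -
    have "integrable P g"
      using g by (intro integrable_bounded_borel[OF P] borel_measurable_continuous_onI)
    moreover have "integrable P (\<lambda>_. B)"
      by (rule integrable_bounded_borel[OF P, where B=B]) (use B in auto)
    ultimately show ?thesis
      unfolding h_def by (simp add: measure_space_prob_measures[OF P])
  qed
  ultimately show ?thesis
    using M \<mu> B by (simp add: divide_less_cancel diff_divide_distrib[symmetric])
qed

theorem tendsto_integral_if_liminf_open:
  fixes M :: "nat \<Rightarrow> 'x::topological_space measure" and g :: "'x \<Rightarrow> real"
  assumes M: "\<And>n. M n \<in> prob_measures borel" and \<mu>: "\<mu> \<in> prob_measures borel"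
    and open_liminf: "\<And>G d. open G \<Longrightarrow> 0 < d \<Longrightarrow>
                        eventually (\<lambda>n. measure \<mu> G - d < measure (M n) G) sequentially"
    and g: "continuous_on UNIV g" "bounded (range g)"
  shows "(\<lambda>n. \<integral>x. g x \<partial>M n) \<longlonglongrightarrow> (\<integral>x. g x \<partial>\<mu>)"
proof -
  obtain B where B: "0 < B" "\<And>x. \<bar>g x\<bar> \<le> B"
    using g(2) unfolding bounded_pos by auto
  have lower: "eventually (\<lambda>n. (\<integral>x. f x \<partial>\<mu>) - e < (\<integral>x. f x \<partial>M n)) sequentially"
    if "continuous_on UNIV f" "\<And>x. \<bar>f x\<bar> \<le> B" "0 < e" for f e
    using M \<mu> open_liminf that(1,2) B(1) that(3) by (rule eventually_integral_gt_if_liminf_open)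
  show ?thesis
  proof (rule order_tendstoI)
    fix a assume "a < (\<integral>x. g x \<partial>\<mu>)"
    then show "eventually (\<lambda>n. a < (\<integral>x. g x \<partial>M n)) sequentially"
      using lower[OF g(1) B(2), of "(\<integral>x. g x \<partial>\<mu>) - a"] by simp
  next
    fix a assume "(\<integral>x. g x \<partial>\<mu>) < a"
    then have "eventually (\<lambda>n. (\<integral>x. - g x \<partial>\<mu>) - (a - (\<integral>x. g x \<partial>\<mu>)) < (\<integral>x. - g x \<partial>M n)) sequentially"
      using g(1) B by (intro lower) (auto intro: continuous_intros)
    then show "eventually (\<lambda>n. (\<integral>x. g x \<partial>M n) < a) sequentially"
      by (rule eventually_mono) simp
  qed
qed

lemma tendsto_integral_infdist_cutoff:
  fixes F :: "'x::metric_space set"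
  assumes F: "closed F" "F \<noteq> {}" and R: "finite_measure R" "sets R = sets borel"
  shows "(\<lambda>k. \<integral>x. max 0 (1 - real k * infdist x F) \<partial>R) \<longlonglongrightarrow> measure R F"
proof -
  define g where "g k x = max 0 (1 - real k * infdist x F)" for k :: nat and x
  have g_lim: "(\<lambda>k. g k x) \<longlonglongrightarrow> indicator F x" for x
  proof (cases "x \<in> F")
    case True
    then show ?thesis
      using in_closed_iff_infdist_zero[OF F] by (simp add: g_def)
  next
    case False
    then have d: "0 < infdist x F"
      using in_closed_iff_infdist_zero[OF F] infdist_nonneg[of x F] by force
    obtain N where N: "inverse (infdist x F) < real N"
      using reals_Archimedean2 by blast
    have "g k x = indicator F x" if "N \<le> k" for k
    proof -
      have "1 < real k * infdist x F"
        using N that d by (simp add: field_simps) (smt (verit) of_nat_le_iff mult_right_mono)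
      then show ?thesis
        using False by (simp add: g_def)
    qed
    then show ?thesis
      by (intro tendsto_eventually) (auto simp: eventually_sequentially)
  qed
  have "measurable R borel = measurable borel (borel :: real measure)"
    using R(2) by (rule measurable_cong_sets) simp
  moreover have "space R = UNIV"
    using R(2) by (metis sets_eq_imp_space_eq space_borel)
  moreover have "g k \<in> borel_measurable borel" for k
    unfolding g_def by (intro borel_measurable_continuous_onI continuous_intros continuous_on_infdist continuous_on_id)
  moreover have "\<bar>g k x\<bar> \<le> 1" for k x
    unfolding g_def using infdist_nonneg[of x F] by auto
  ultimately have "(\<lambda>k. \<integral>x. g k x \<partial>R) \<longlonglongrightarrow> (\<integral>x. indicator F x \<partial>R)"
    using F g_lim R(1)
    by (intro integral_dominated_convergence[where w="\<lambda>_. 1"]) (auto simp: finite_measure.integrable_const)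
  then show ?thesis
    using \<open>space R = UNIV\<close> by (simp add: g_def)
qed

lemma measure_eqI_bounded_continuous:
  fixes P Q :: "'x::metric_space measure"
  assumes P: "finite_measure P" "sets P = sets borel" and Q: "finite_measure Q" "sets Q = sets borel"
    and eq: "\<And>g :: 'x \<Rightarrow> real. continuous_on UNIV g \<Longrightarrow> bounded (range g) \<Longrightarrow>
               (\<integral>x. g x \<partial>P) = (\<integral>x. g x \<partial>Q)"
  shows "P = Q"
proof -
  have closed_eq: "measure P F = measure Q F" if F: "closed F" "F \<noteq> {}" for F
  proof -
    have "continuous_on UNIV (\<lambda>x. max 0 (1 - real k * infdist x F))" for k
      by (intro continuous_intros continuous_on_infdist continuous_on_id)
    moreover have "bounded (range (\<lambda>x. max 0 (1 - real k * infdist x F)))" for k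
      using infdist_nonneg[of _ F] by (intro boundedI[where B=1]) auto
    ultimately have "(\<lambda>k. \<integral>x. max 0 (1 - real k * infdist x F) \<partial>P) \<longlonglongrightarrow> measure Q F"
      using tendsto_integral_infdist_cutoff[OF F Q] eq by simp
    then show ?thesis
      using tendsto_integral_infdist_cutoff[OF F P] LIMSEQ_unique by blast
  qed
  have sets_borel: "sets borel = sigma_sets (UNIV :: 'x set) (Collect closed)"
    by (subst borel_eq_closed) (simp add: sets_measure_of)
  show ?thesis
  proof (rule measure_eqI_generator_eq[where E="Collect closed" and \<Omega>=UNIV and A="\<lambda>_. UNIV"])
    show "emeasure P X = emeasure Q X" if "X \<in> Collect closed" for X
      using that closed_eq[of X] P Q
      by (cases "X = {}") (simp_all add: finite_measure.emeasure_eq_measure)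
    show "emeasure P UNIV \<noteq> \<infinity>" for i :: nat
      using finite_measure.emeasure_finite[OF P(1), of UNIV] by (simp add: top_ennreal_def)
  qed (auto simp: Int_stable_def P(2) Q(2) sets_borel)
qed

lemma measure_space_borel_if_closed_lambda_system:
  fixes \<gamma> :: "'x::topological_space set \<Rightarrow> ennreal"
  assumes "outer_measure_space UNIV \<gamma>" "\<And>F. closed F \<Longrightarrow> F \<in> lambda_system UNIV UNIV \<gamma>"
  shows "measure_space UNIV (sets borel) \<gamma>"
proof -
  have lambda: "measure_space UNIV (lambda_system UNIV UNIV \<gamma>) \<gamma>"
    using sigma_algebra_Pow[of "UNIV :: 'x set"] assms(1) by (simp add: sigma_algebra.caratheodory_lemma)
  moreover have "sigma_algebra (UNIV :: 'x set) (sets borel)"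
    using sets.sigma_algebra_axioms[of "borel :: 'x measure"] by simp
  moreover have "sets borel \<subseteq> lambda_system UNIV UNIV \<gamma>"
  proof -
    have "sigma_algebra UNIV (lambda_system UNIV UNIV \<gamma>)"
      using lambda by (simp add: measure_space_def)
    then have "sigma_sets UNIV (Collect closed) \<subseteq> lambda_system UNIV UNIV \<gamma>"
      using assms(2) by (intro sigma_algebra.sigma_sets_subset) auto
    then show ?thesis
      by (subst borel_eq_closed) (simp add: sets_measure_of)
  qed
  ultimately show ?thesis
    by (rule measure_down)
qed

section \<open>Prokhorov's theorem\<close>

lemma diagonal_subseq_convergent:
  fixes x :: "nat \<Rightarrow> nat \<Rightarrow> 'a::heine_borel"
  assumes bounded: "\<And>k. bounded (range (x k))"
  shows "\<exists>r. strict_mono r \<and> (\<forall>k. convergent (\<lambda>n. x k (r n)))"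
proof -
  interpret subseqs "\<lambda>k s. convergent (\<lambda>n. x k (s n))"
  proof
    fix k :: nat and s :: "nat \<Rightarrow> nat"
    have "bounded (range (\<lambda>n. x k (s n)))"
      using bounded[of k] by (rule bounded_subset) auto
    then obtain l r where "strict_mono r" "((\<lambda>n. x k (s n)) \<circ> r) \<longlonglongrightarrow> l"
      using bounded_imp_convergent_subsequence by blast
    then show "\<exists>r. strict_mono r \<and> convergent (\<lambda>n. x k ((s \<circ> r) n))"
      by (auto simp: convergent_def o_def)
  qed
  have "convergent (\<lambda>n. x k (diagseq n))" for k
  proof -
    have eq: "(\<lambda>n. x k ((seqseq (Suc k) \<circ> (\<lambda>n. fold_reduce (Suc k) n (Suc k + n))) n))
          = (\<lambda>n. x k (seqseq (Suc k) n)) \<circ> (\<lambda>n. fold_reduce (Suc k) n (Suc k + n))"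
      by auto
    have "convergent (\<lambda>n. x k ((diagseq \<circ> (+) (Suc k)) n))"
      unfolding diagseq_seqseq eq
      by (intro convergent_subseq_convergent seqseq_holds subseq_diagonal_rest)
    then obtain L where "(\<lambda>n. x k (diagseq (n + Suc k))) \<longlonglongrightarrow> L"
      by (auto simp: add.commute dest: convergentD)
    then have "(\<lambda>n. x k (diagseq n)) \<longlonglongrightarrow> L"
      by (rule LIMSEQ_offset)
    then show ?thesis
      by (rule convergentI)
  qed
  then show ?thesis
    using subseq_diagseq by blast
qed

lemma compact_imp_countable_dense:
  fixes S :: "'x::metric_space set"
  assumes "compact S"
  obtains D where "countable D" "D \<subseteq> S" "\<And>x e. x \<in> S \<Longrightarrow> 0 < e \<Longrightarrow> \<exists>d\<in>D. dist x d < e"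
proof -
  have "\<forall>\<epsilon>>0. \<exists>k. finite k \<and> k \<subseteq> S \<and> S \<subseteq> (\<Union>x\<in>k. ball x \<epsilon>)"
    using compact_imp_seq_compact[OF assms] by (rule seq_compact_imp_totally_bounded)
  then have "\<forall>n::nat. \<exists>k. finite k \<and> k \<subseteq> S \<and> S \<subseteq> (\<Union>x\<in>k. ball x (1 / Suc n))"
    by simp
  then obtain k where k: "\<And>n. finite (k n)" "\<And>n. k n \<subseteq> S" "\<And>n. S \<subseteq> (\<Union>x\<in>k n. ball x (1 / Suc n))"
    by metis
  show ?thesis
  proof (rule that[of "\<Union>n. k n"])
    show "countable (\<Union>n. k n)"
      using k(1) by (intro countable_UN) (auto intro: countable_finite)
    show "(\<Union>n. k n) \<subseteq> S"
      using k(2) by auto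
    fix x e assume x: "x \<in> S" and e: "(0::real) < e"
    obtain n where n: "inverse (real (Suc n)) < e"
      using reals_Archimedean e by blast
    obtain d where d: "d \<in> k n" "x \<in> ball d (1 / Suc n)"
      using k(3) x by blast
    then have "dist x d < e"
      using n by (simp add: dist_commute inverse_eq_divide)
    then show "\<exists>d\<in>\<Union>n. k n. dist x d < e"
      using d(1) by blast
  qed
qed

(* The construction in the proof of Theorem 5.1 of Billingsley, Convergence of Probability
   Measures (1999): alpha is the limit along a diagonal subsequence on the countable class
   approx_sets of finite unions of sets cball d r \<inter> K m, beta its inner extension to open
   sets, and gamma the outer extension of beta, an outer measure whose Caratheodory
   restriction to the Borel sets is the limit measure. *)
locale tight_prob_sequence =
  fixes M :: "nat \<Rightarrow> 'x::metric_space measure" and K D :: "nat \<Rightarrow> 'x set"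
  assumes M_prob: "\<And>n. M n \<in> prob_measures borel"
    and K_compact: "\<And>m. compact (K m)" and K_incseq: "incseq K"
    and K_measure: "\<And>m n. 1 - 1 / Suc m \<le> measure (M n) (K m)"
    and D_countable: "\<And>m. countable (D m)" and D_subset: "\<And>m. D m \<subseteq> K m"
    and D_dense: "\<And>m x e. x \<in> K m \<Longrightarrow> 0 < e \<Longrightarrow> \<exists>d\<in>D m. dist x d < e"
begin

lemma M_finite: "finite_measure (M n)"
  using M_prob[of n] by (simp add: prob_measures_def prob_space_def)

lemma sets_M: "sets (M n) = sets borel"
  using M_prob[of n] by (simp add: prob_measures_def)

lemma measure_M_le_1: "measure (M n) A \<le> 1"
  using M_prob[of n] by (simp add: prob_measures_def prob_space.prob_le_1)

definition basic_compacts :: "'x set set" where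
  "basic_compacts = range K \<union> (\<Union>m. \<Union>d\<in>D m. \<Union>r\<in>\<rat> \<inter> {0<..}. {cball d r \<inter> K m})"

definition approx_sets :: "'x set set" where
  "approx_sets = {\<Union>F | F. finite F \<and> F \<subseteq> basic_compacts}"

lemma cball_in_basic_compacts: "d \<in> D m \<Longrightarrow> r \<in> \<rat> \<Longrightarrow> 0 < r \<Longrightarrow> cball d r \<inter> K m \<in> basic_compacts"
  unfolding basic_compacts_def by blast

lemma countable_approx_sets: "countable approx_sets"
proof -
  have "countable basic_compacts"
    unfolding basic_compacts_def
    by (intro countable_Un countable_UN countable_image countable_Int1 countable_rat D_countable) auto
  moreover have "approx_sets = Union ` {F. finite F \<and> F \<subseteq> basic_compacts}"
    unfolding approx_sets_def by auto
  ultimately show ?thesis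
    by (simp add: countable_Collect_finite_subset)
qed

lemma Union_in_approx_sets: "finite F \<Longrightarrow> F \<subseteq> basic_compacts \<Longrightarrow> \<Union>F \<in> approx_sets"
  unfolding approx_sets_def by blast

lemma empty_in_approx_sets: "{} \<in> approx_sets"
  unfolding approx_sets_def by (intro CollectI exI[of _ "{}"]) auto

lemma K_in_approx_sets: "K m \<in> approx_sets"
  unfolding approx_sets_def basic_compacts_def by (intro CollectI exI[of _ "{K m}"]) auto

lemma Un_in_approx_sets:
  assumes "H1 \<in> approx_sets" "H2 \<in> approx_sets"
  shows "H1 \<union> H2 \<in> approx_sets"
proof -
  obtain F1 F2 where "H1 = \<Union>F1" "finite F1" "F1 \<subseteq> basic_compacts" "H2 = \<Union>F2" "finite F2" "F2 \<subseteq> basic_compacts"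
    using assms unfolding approx_sets_def by blast
  then show ?thesis
    unfolding approx_sets_def by (intro CollectI exI[of _ "F1 \<union> F2"]) auto
qed

lemma compact_approx_sets: "H \<in> approx_sets \<Longrightarrow> compact H"
  unfolding approx_sets_def basic_compacts_def
  using K_compact by (fastforce intro!: compact_Union closed_Int_compact)

lemma closed_approx_sets: "H \<in> approx_sets \<Longrightarrow> closed H"
  by (simp add: compact_approx_sets compact_imp_closed)

lemma approx_sets_subset_K: "H \<in> approx_sets \<Longrightarrow> \<exists>m. H \<subseteq> K m"
proof -
  have "\<exists>m. \<Union>F \<subseteq> K m" if "finite F" "F \<subseteq> basic_compacts" for F
    using that
  proof (induction F rule: finite_induct)
    case (insert B F)
    obtain m1 where "B \<subseteq> K m1"
      using insert.prems unfolding basic_compacts_def by blast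
    moreover obtain m2 where "\<Union>F \<subseteq> K m2"
      using insert by auto
    moreover have "K m1 \<subseteq> K (max m1 m2)" "K m2 \<subseteq> K (max m1 m2)"
      using K_incseq by (auto simp: incseq_def)
    ultimately show ?case
      by blast
  qed simp
  then show "H \<in> approx_sets \<Longrightarrow> \<exists>m. H \<subseteq> K m"
    unfolding approx_sets_def by blast
qed

lemma rational_ball_between:
  assumes "open G" "x \<in> G" "x \<in> K m"
  shows "\<exists>d r. d \<in> D m \<and> r \<in> \<rat> \<and> 0 < r \<and> cball d r \<subseteq> G \<and> x \<in> ball d r"
proof -
  obtain e where e: "0 < e" "ball x e \<subseteq> G"
    using open_contains_ball assms(1,2) by blast
  obtain d where d: "d \<in> D m" "dist x d < e / 3"
    using D_dense[OF assms(3), of "e / 3"] e by auto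
  obtain r where r: "r \<in> \<rat>" "e / 3 < r" "r < 2 * e / 3"
    using Rats_dense_in_real[of "e / 3" "2 * e / 3"] e by auto
  have "cball d r \<subseteq> G"
  proof
    fix y assume "y \<in> cball d r"
    then have "y \<in> ball x e"
      using dist_triangle[of x y d] d r by simp
    then show "y \<in> G"
      using e(2) by blast
  qed
  moreover have "x \<in> ball d r" "0 < r"
    using d r e by (simp_all add: dist_commute)
  ultimately show ?thesis
    using d(1) r(1) by (intro exI[of _ d] exI[of _ r] conjI)
qed

lemma approx_sets_between:
  assumes "closed F" "open G" "F \<subseteq> G" "F \<subseteq> K m"
  shows "\<exists>H\<in>approx_sets. F \<subseteq> H \<and> H \<subseteq> G"
proof -
  have "compact F"
    using closed_Int_compact[OF \<open>closed F\<close> K_compact[of m]] \<open>F \<subseteq> K m\<close> by (simp add: Int_absorb2)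
  define I where "I = {(d, r). d \<in> D m \<and> r \<in> \<rat> \<and> 0 < r \<and> cball d r \<subseteq> G}"
  have cover: "F \<subseteq> (\<Union>p\<in>I. ball (fst p) (snd p))"
  proof
    fix x assume "x \<in> F"
    then obtain d r where "d \<in> D m" "r \<in> \<rat>" "0 < r" "cball d r \<subseteq> G" "x \<in> ball d r"
      using rational_ball_between[OF \<open>open G\<close>] assms(3,4) by blast
    then show "x \<in> (\<Union>p\<in>I. ball (fst p) (snd p))"
      unfolding I_def by force
  qed
  obtain J where J: "J \<subseteq> I" "finite J" "F \<subseteq> (\<Union>p\<in>J. ball (fst p) (snd p))"
    by (rule compactE_image[OF \<open>compact F\<close> _ cover]) auto
  define H where "H = (\<Union>p\<in>J. cball (fst p) (snd p) \<inter> K m)"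
  have "(\<lambda>p. cball (fst p) (snd p) \<inter> K m) ` J \<subseteq> basic_compacts"
  proof
    fix B assume "B \<in> (\<lambda>p. cball (fst p) (snd p) \<inter> K m) ` J"
    then obtain d r where "(d, r) \<in> I" "B = cball d r \<inter> K m"
      using J(1) by auto
    then show "B \<in> basic_compacts"
      unfolding I_def by (simp add: cball_in_basic_compacts)
  qed
  then have "H \<in> approx_sets"
    unfolding H_def by (rule Union_in_approx_sets[OF finite_imageI[OF J(2)]])
  moreover have "F \<subseteq> H"
  proof
    fix x assume "x \<in> F"
    then obtain p where "p \<in> J" "x \<in> ball (fst p) (snd p)"
      using J(3) by blast
    then show "x \<in> H"
      unfolding H_def using \<open>x \<in> F\<close> \<open>F \<subseteq> K m\<close> by (auto intro!: bexI[of _ p] less_imp_le)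
  qed
  moreover have "H \<subseteq> G"
    using J(1) unfolding H_def I_def by fastforce
  ultimately show ?thesis
    by blast
qed

definition diag_subseq :: "nat \<Rightarrow> nat" where
  "diag_subseq = (SOME r. strict_mono r \<and> (\<forall>H\<in>approx_sets. convergent (\<lambda>n. measure (M (r n)) H)))"

lemma diag_subseq: "strict_mono diag_subseq" "H \<in> approx_sets \<Longrightarrow> convergent (\<lambda>n. measure (M (diag_subseq n)) H)"
proof -
  have "bounded (range (\<lambda>n. measure (M n) A))" for A
    using measure_M_le_1 by (intro boundedI[where B=1]) auto
  from diagonal_subseq_convergent[of "\<lambda>k n. measure (M n) (from_nat_into approx_sets k)", OF this]
  obtain r where r: "strict_mono r \<and> (\<forall>k. convergent (\<lambda>n. measure (M (r n)) (from_nat_into approx_sets k)))" ..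
  have "convergent (\<lambda>n. measure (M (r n)) H)" if H: "H \<in> approx_sets" for H
  proof -
    obtain k where "from_nat_into approx_sets k = H"
      using from_nat_into_surj[OF countable_approx_sets H] ..
    moreover have "convergent (\<lambda>n. measure (M (r n)) (from_nat_into approx_sets k))"
      using conjunct2[OF r] by (rule spec)
    ultimately show ?thesis
      by simp
  qed
  then have "\<exists>r. strict_mono r \<and> (\<forall>H\<in>approx_sets. convergent (\<lambda>n. measure (M (r n)) H))"
    using conjunct1[OF r] by blast
  then have props: "strict_mono diag_subseq \<and> (\<forall>H\<in>approx_sets. convergent (\<lambda>n. measure (M (diag_subseq n)) H))"
    unfolding diag_subseq_def by (rule someI_ex)
  then show "strict_mono diag_subseq"
    by (rule conjunct1)
  show "H \<in> approx_sets \<Longrightarrow> convergent (\<lambda>n. measure (M (diag_subseq n)) H)"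
    by (erule bspec[OF conjunct2[OF props]])
qed

lemma borel_approx_sets: "H \<in> approx_sets \<Longrightarrow> H \<in> sets (M n)"
  by (simp add: closed_approx_sets sets_M)

definition alpha :: "'x set \<Rightarrow> real" where
  "alpha H = lim (\<lambda>n. measure (M (diag_subseq n)) H)"

lemma alpha_tendsto: "H \<in> approx_sets \<Longrightarrow> (\<lambda>n. measure (M (diag_subseq n)) H) \<longlonglongrightarrow> alpha H"
  unfolding alpha_def using diag_subseq(2) by (simp add: convergent_LIMSEQ_iff)

lemma alpha_le_1: "H \<in> approx_sets \<Longrightarrow> alpha H \<le> 1"
  by (rule LIMSEQ_le_const2[OF alpha_tendsto]) (auto simp: measure_M_le_1)

lemma alpha_mono: "H1 \<in> approx_sets \<Longrightarrow> H2 \<in> approx_sets \<Longrightarrow> H1 \<subseteq> H2 \<Longrightarrow> alpha H1 \<le> alpha H2"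
  by (rule LIMSEQ_le[OF alpha_tendsto alpha_tendsto])
     (auto intro!: finite_measure.finite_measure_mono[OF M_finite] borel_approx_sets)

lemma alpha_Un_le:
  "H1 \<in> approx_sets \<Longrightarrow> H2 \<in> approx_sets \<Longrightarrow> alpha (H1 \<union> H2) \<le> alpha H1 + alpha H2"
  by (rule LIMSEQ_le[OF alpha_tendsto tendsto_add[OF alpha_tendsto alpha_tendsto]])
     (auto intro!: measure_Un_le Un_in_approx_sets borel_approx_sets)

lemma alpha_Un_disjoint:
  assumes "H1 \<in> approx_sets" "H2 \<in> approx_sets" "H1 \<inter> H2 = {}"
  shows "alpha (H1 \<union> H2) = alpha H1 + alpha H2"
proof (rule LIMSEQ_unique[OF alpha_tendsto])
  show "H1 \<union> H2 \<in> approx_sets"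
    using assms(1,2) by (rule Un_in_approx_sets)
  have "measure (M (diag_subseq n)) (H1 \<union> H2) = measure (M (diag_subseq n)) H1 + measure (M (diag_subseq n)) H2" for n
    using assms by (intro finite_measure.finite_measure_Union[OF M_finite] borel_approx_sets)
  then show "(\<lambda>n. measure (M (diag_subseq n)) (H1 \<union> H2)) \<longlonglongrightarrow> alpha H1 + alpha H2"
    using assms by (simp add: tendsto_add alpha_tendsto)
qed

lemma alpha_empty: "alpha {} = 0"
  unfolding alpha_def by simp

lemma alpha_K: "1 - 1 / Suc m \<le> alpha (K m)"
  by (rule LIMSEQ_le_const[OF alpha_tendsto[OF K_in_approx_sets]]) (use K_measure in blast)

definition beta :: "'x set \<Rightarrow> real" where
  "beta G = (SUP H \<in> {H \<in> approx_sets. H \<subseteq> G}. alpha H)"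

lemma beta_bdd: "bdd_above (alpha ` {H \<in> approx_sets. H \<subseteq> G})"
  using alpha_le_1 by (auto intro!: bdd_aboveI)

lemma beta_upper: "H \<in> approx_sets \<Longrightarrow> H \<subseteq> G \<Longrightarrow> alpha H \<le> beta G"
  unfolding beta_def by (rule cSUP_upper[OF _ beta_bdd]) auto

lemma beta_least: "(\<And>H. H \<in> approx_sets \<Longrightarrow> H \<subseteq> G \<Longrightarrow> alpha H \<le> c) \<Longrightarrow> beta G \<le> c"
  unfolding beta_def using empty_in_approx_sets by (intro cSUP_least) auto

lemma beta_approx:
  assumes "0 < e"
  shows "\<exists>H\<in>approx_sets. H \<subseteq> G \<and> beta G - e < alpha H"
proof -
  have ne: "{H \<in> approx_sets. H \<subseteq> G} \<noteq> {}"
    using empty_in_approx_sets by auto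
  have "beta G - e < beta G"
    using assms by simp
  then show ?thesis
    unfolding beta_def less_cSUP_iff[OF ne beta_bdd] by auto
qed

lemma beta_mono: "G1 \<subseteq> G2 \<Longrightarrow> beta G1 \<le> beta G2"
  by (rule beta_least) (auto intro: beta_upper)

lemma beta_nonneg: "0 \<le> beta G"
  using beta_upper[OF empty_in_approx_sets, of G] alpha_empty by simp

lemma beta_le_1: "beta G \<le> 1"
  by (rule beta_least) (rule alpha_le_1)

lemma beta_empty: "beta {} = 0"
  using beta_least[of "{}" 0] alpha_empty beta_nonneg[of "{}"] by force

lemma beta_Un_le:
  assumes "open G1" "open G2"
  shows "beta (G1 \<union> G2) \<le> beta G1 + beta G2"
proof (rule beta_least)
  fix H assume H: "H \<in> approx_sets" "H \<subseteq> G1 \<union> G2"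
  obtain m where m: "H \<subseteq> K m"
    using approx_sets_subset_K[OF H(1)] ..
  have "closed H"
    using H(1) by (rule closed_approx_sets)
  \<comment> \<open>Split H into two closed pieces, one inside each G i, by separating H - G1 from H - G2.\<close>
  have "normal_space (euclidean :: 'x topology)"
    by (simp add: metrizable_imp_normal_space metrizable_space_euclidean)
  moreover have "closed (H - G1)" "closed (H - G2)" "disjnt (H - G1) (H - G2)"
    using \<open>closed H\<close> assms H(2) by (auto simp: disjnt_def)
  ultimately have "\<exists>V1 V2. open V1 \<and> open V2 \<and> H - G1 \<subseteq> V1 \<and> H - G2 \<subseteq> V2 \<and> disjnt V1 V2"
    unfolding normal_space_def by simp
  then obtain V1 V2 where V: "open V1" "open V2" "H - G1 \<subseteq> V1" "H - G2 \<subseteq> V2" "V1 \<inter> V2 = {}"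
    unfolding disjnt_def by blast
  obtain H1 where H1: "H1 \<in> approx_sets" "H - V1 \<subseteq> H1" "H1 \<subseteq> G1"
    using approx_sets_between[of "H - V1" G1 m] V \<open>closed H\<close> m assms by blast
  obtain H2 where H2: "H2 \<in> approx_sets" "H - V2 \<subseteq> H2" "H2 \<subseteq> G2"
    using approx_sets_between[of "H - V2" G2 m] V \<open>closed H\<close> m assms by blast
  have "alpha H \<le> alpha (H1 \<union> H2)"
    using H H1 H2 V(5) by (intro alpha_mono Un_in_approx_sets) auto
  also have "\<dots> \<le> alpha H1 + alpha H2"
    using H1 H2 by (intro alpha_Un_le) auto
  also have "\<dots> \<le> beta G1 + beta G2"
    using H1 H2 by (intro add_mono beta_upper) auto
  finally show "alpha H \<le> beta G1 + beta G2" .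
qed

lemma beta_UN_le:
  fixes G :: "nat \<Rightarrow> 'x set"
  assumes "\<And>i. open (G i)"
  shows "beta (\<Union>i<N. G i) \<le> (\<Sum>i<N. beta (G i))"
proof (induction N)
  case (Suc N)
  have "beta (\<Union>i<Suc N. G i) = beta ((\<Union>i<N. G i) \<union> G N)"
    by (simp add: lessThan_Suc Un_commute)
  also have "\<dots> \<le> beta (\<Union>i<N. G i) + beta (G N)"
    using assms by (intro beta_Un_le) auto
  also have "\<dots> \<le> (\<Sum>i<Suc N. beta (G i))"
    using Suc by simp
  finally show ?case .
qed (simp add: beta_empty)

lemma beta_countably_subadditive:
  fixes G :: "nat \<Rightarrow> 'x set"
  assumes "\<And>i. open (G i)"
  shows "ennreal (beta (\<Union>i. G i)) \<le> (\<Sum>i. ennreal (beta (G i)))"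
proof (cases "(\<Sum>i. ennreal (beta (G i))) = \<top>")
  case False
  then obtain s where s: "(\<Sum>i. ennreal (beta (G i))) = ennreal s" "0 \<le> s"
    using ennreal_cases[of "\<Sum>i. ennreal (beta (G i))"] by auto
  \<comment> \<open>Each H is compact, so it is covered by finitely many G i.\<close>
  have "beta (\<Union>i. G i) \<le> s"
  proof (rule beta_least)
    fix H assume H: "H \<in> approx_sets" "H \<subseteq> (\<Union>i. G i)"
    obtain J where J: "J \<subseteq> UNIV" "finite J" "H \<subseteq> (\<Union>i\<in>J. G i)"
      by (rule compactE_image[OF compact_approx_sets[OF H(1)], of UNIV G]) (use assms H in auto)
    obtain N where "J \<subseteq> {..<N}"
      using finite_nat_bounded[OF J(2)] by blast
    then have "H \<subseteq> (\<Union>i<N. G i)"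
      using J(3) by blast
    with H(1) have "alpha H \<le> beta (\<Union>i<N. G i)"
      by (rule beta_upper)
    also have "\<dots> \<le> (\<Sum>i<N. beta (G i))"
      using assms by (rule beta_UN_le)
    finally have "ennreal (alpha H) \<le> (\<Sum>i<N. ennreal (beta (G i)))"
      by (simp add: sum_ennreal beta_nonneg ennreal_leI)
    also have "\<dots> \<le> ennreal s"
      unfolding s(1)[symmetric] by (intro sum_le_suminf summableI) auto
    finally show "alpha H \<le> s"
      using s(2) by (simp add: ennreal_le_iff)
  qed
  then show ?thesis
    using s by (simp add: ennreal_leI)
qed simp

definition gamma :: "'x set \<Rightarrow> real" where
  "gamma A = (INF G \<in> {G. open G \<and> A \<subseteq> G}. beta G)"

lemma gamma_bdd: "bdd_below (beta ` {G. open G \<and> A \<subseteq> G})"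
  using beta_nonneg by (auto intro!: bdd_belowI)

lemma gamma_le_beta: "open G \<Longrightarrow> A \<subseteq> G \<Longrightarrow> gamma A \<le> beta G"
  unfolding gamma_def by (rule cINF_lower[OF gamma_bdd]) auto

lemma gamma_greatest: "(\<And>G. open G \<Longrightarrow> A \<subseteq> G \<Longrightarrow> c \<le> beta G) \<Longrightarrow> c \<le> gamma A"
  unfolding gamma_def by (rule cINF_greatest) auto

lemma gamma_approx:
  assumes "0 < e"
  shows "\<exists>G. open G \<and> A \<subseteq> G \<and> beta G < gamma A + e"
proof -
  have ne: "{G. open G \<and> A \<subseteq> G} \<noteq> {}"
    by auto
  have "gamma A < gamma A + e"
    using assms by simp
  then show ?thesis
    unfolding gamma_def cINF_less_iff[OF ne gamma_bdd] by auto
qed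

lemma gamma_open: "open G \<Longrightarrow> gamma G = beta G"
  by (intro antisym gamma_le_beta gamma_greatest beta_mono) auto

lemma gamma_mono: "A \<subseteq> B \<Longrightarrow> gamma A \<le> gamma B"
  by (rule gamma_greatest) (auto intro: gamma_le_beta)

lemma gamma_nonneg: "0 \<le> gamma A"
  by (rule gamma_greatest) (rule beta_nonneg)

lemma gamma_empty: "gamma {} = 0"
  using gamma_open[of "{}"] beta_empty by simp

lemma gamma_Un_le: "gamma (A \<union> B) \<le> gamma A + gamma B"
proof (rule field_le_epsilon)
  fix e :: real assume e: "0 < e"
  obtain GA where GA: "open GA" "A \<subseteq> GA" "beta GA < gamma A + e / 2"
    using gamma_approx[of "e / 2"] e by auto
  obtain GB where GB: "open GB" "B \<subseteq> GB" "beta GB < gamma B + e / 2"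
    using gamma_approx[of "e / 2"] e by auto
  have "gamma (A \<union> B) \<le> beta (GA \<union> GB)"
    using GA GB by (intro gamma_le_beta) auto
  also have "\<dots> \<le> beta GA + beta GB"
    using GA GB by (intro beta_Un_le) auto
  finally show "gamma (A \<union> B) \<le> gamma A + gamma B + e"
    using GA GB by simp
qed

lemma gamma_countably_subadditive:
  "ennreal (gamma (\<Union>i. A i)) \<le> (\<Sum>i. ennreal (gamma (A i)))"
proof (rule ennreal_le_epsilon)
  fix e :: real assume e: "0 < e"
  have "\<forall>i. \<exists>G. open G \<and> A i \<subseteq> G \<and> beta G < gamma (A i) + e * (1 / 2) ^ Suc i"
    using gamma_approx e by simp
  then obtain G where G: "\<And>i. open (G i)" "\<And>i. A i \<subseteq> G i"
    "\<And>i. beta (G i) < gamma (A i) + e * (1 / 2) ^ Suc i"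
    by metis
  have e_sums: "(\<lambda>i. e * (1 / 2) ^ Suc i) sums e"
    using sums_mult[OF power_half_series, of e] by simp
  have "ennreal (gamma (\<Union>i. A i)) \<le> ennreal (beta (\<Union>i. G i))"
    using G by (intro ennreal_leI gamma_le_beta) auto
  also have "\<dots> \<le> (\<Sum>i. ennreal (beta (G i)))"
    using G(1) by (rule beta_countably_subadditive)
  also have "\<dots> \<le> (\<Sum>i. ennreal (gamma (A i)) + ennreal (e * (1 / 2) ^ Suc i))"
    using G(3) e gamma_nonneg
    by (intro suminf_le) (auto simp: ennreal_plus[symmetric] simp del: ennreal_plus intro!: ennreal_leI less_imp_le)
  also have "\<dots> = (\<Sum>i. ennreal (gamma (A i))) + ennreal e"
    using e e_sums by (simp add: suminf_add[symmetric] suminf_ennreal2 sums_iff)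
  finally show "ennreal (gamma (\<Union>i. A i)) \<le> (\<Sum>i. ennreal (gamma (A i))) + ennreal e" .
qed

lemma gamma_split_open:
  assumes "closed F" "open G"
  shows "gamma (F \<inter> G) + gamma (G - F) \<le> beta G"
proof (rule field_le_epsilon)
  fix e :: real assume e: "0 < e"
  obtain H1 where H1: "H1 \<in> approx_sets" "H1 \<subseteq> G - F" "beta (G - F) - e / 2 < alpha H1"
    using beta_approx[of "e / 2" "G - F"] e by auto
  obtain H2 where H2: "H2 \<in> approx_sets" "H2 \<subseteq> G - H1" "beta (G - H1) - e / 2 < alpha H2"
    using beta_approx[of "e / 2" "G - H1"] e by auto
  have "alpha H1 + alpha H2 = alpha (H1 \<union> H2)"
    using H1 H2 by (intro alpha_Un_disjoint[symmetric]) auto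
  also have "\<dots> \<le> beta G"
    using H1 H2 by (intro beta_upper Un_in_approx_sets) auto
  finally have "alpha H1 + alpha H2 \<le> beta G" .
  moreover have "gamma (G - F) \<le> beta (G - F)"
    using assms by (intro gamma_le_beta) auto
  moreover have "gamma (F \<inter> G) \<le> beta (G - H1)"
    using assms closed_approx_sets[OF H1(1)] H1(2) by (intro gamma_le_beta) auto
  ultimately show "gamma (F \<inter> G) + gamma (G - F) \<le> beta G + e"
    using H1 H2 by linarith
qed

lemma gamma_caratheodory:
  assumes "closed F"
  shows "gamma (F \<inter> X) + gamma (X - F) = gamma X"
proof (rule antisym)
  show "gamma (F \<inter> X) + gamma (X - F) \<le> gamma X"
  proof (rule gamma_greatest)
    fix G assume G: "open G" "X \<subseteq> G"
    have "gamma (F \<inter> X) \<le> gamma (F \<inter> G)" "gamma (X - F) \<le> gamma (G - F)"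
      using G by (auto intro: gamma_mono)
    then show "gamma (F \<inter> X) + gamma (X - F) \<le> beta G"
      using gamma_split_open[OF assms G(1)] by linarith
  qed
  have "F \<inter> X \<union> (X - F) = X"
    by blast
  then show "gamma X \<le> gamma (F \<inter> X) + gamma (X - F)"
    using gamma_Un_le[of "F \<inter> X" "X - F"] by simp
qed

definition limit_measure :: "'x measure" where
  "limit_measure = measure_of UNIV (sets borel) (\<lambda>A. ennreal (gamma A))"

lemma measure_space_gamma: "measure_space UNIV (sets borel) (\<lambda>A. ennreal (gamma A))"
proof (rule measure_space_borel_if_closed_lambda_system)
  show "outer_measure_space UNIV (\<lambda>A. ennreal (gamma A))"
    unfolding outer_measure_space_def positive_def increasing_def countably_subadditive_def
    by (auto simp: gamma_empty intro!: ennreal_leI gamma_mono gamma_countably_subadditive)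
  show "F \<in> lambda_system UNIV UNIV (\<lambda>A. ennreal (gamma A))" if "closed F" for F
  proof -
    have "(UNIV - F) \<inter> X = X - F" for X
      by blast
    then show ?thesis
      unfolding lambda_system_def using gamma_caratheodory[OF that]
      by (simp add: ennreal_plus[symmetric] gamma_nonneg del: ennreal_plus)
  qed
qed

lemma sets_limit_measure [simp]: "sets limit_measure = sets borel"
  unfolding limit_measure_def
  using sigma_algebra.sigma_sets_eq[OF sets.sigma_algebra_axioms[of "borel :: 'x measure"]]
  by (subst sets_measure_of) (auto dest: sets.sets_into_space)

lemma emeasure_limit_measure: "A \<in> sets borel \<Longrightarrow> emeasure limit_measure A = ennreal (gamma A)"
  unfolding limit_measure_def using measure_space_gamma
  by (subst emeasure_measure_of_sigma) (auto simp: measure_space_def)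

lemma measure_limit_measure: "A \<in> sets borel \<Longrightarrow> measure limit_measure A = gamma A"
  by (simp add: measure_def emeasure_limit_measure gamma_nonneg)

lemma limit_measure_prob: "limit_measure \<in> prob_measures borel"
proof -
  have "1 \<le> beta UNIV"
  proof (rule field_le_epsilon)
    fix e :: real assume "0 < e"
    then obtain m where m: "inverse (real (Suc m)) < e"
      using reals_Archimedean by blast
    have "1 - 1 / Suc m \<le> beta UNIV"
      using alpha_K[of m] beta_upper[OF K_in_approx_sets[of m], of UNIV] by simp
    then show "1 \<le> beta UNIV + e"
      using m by (simp add: inverse_eq_divide)
  qed
  then have "emeasure limit_measure UNIV = 1"
    using beta_le_1[of UNIV] by (simp add: emeasure_limit_measure gamma_open)
  moreover have "space limit_measure = UNIV"
    using sets_eq_imp_space_eq[OF sets_limit_measure] by simp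
  ultimately have "prob_space limit_measure"
    by (intro prob_spaceI) simp
  then show ?thesis
    by (simp add: prob_measures_def)
qed


lemma eventually_measure_open_gt:
  assumes "open G" "0 < d"
  shows "eventually (\<lambda>n. measure limit_measure G - d < measure (M (diag_subseq n)) G) sequentially"
proof -
  obtain H where H: "H \<in> approx_sets" "H \<subseteq> G" "beta G - d / 2 < alpha H"
    using beta_approx[of "d / 2" G] assms by auto
  have "eventually (\<lambda>n. alpha H - d / 2 < measure (M (diag_subseq n)) H) sequentially"
    using order_tendstoD(1)[OF alpha_tendsto[OF H(1)], of "alpha H - d / 2"] assms by simp
  then show ?thesis
  proof (rule eventually_mono)
    fix n assume "alpha H - d / 2 < measure (M (diag_subseq n)) H"
    moreover have "measure (M (diag_subseq n)) H \<le> measure (M (diag_subseq n)) G"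
      using H assms by (intro finite_measure.finite_measure_mono[OF M_finite]) (auto simp: sets_M)
    moreover have "measure limit_measure G = beta G"
      using assms by (simp add: measure_limit_measure gamma_open)
    ultimately show "measure limit_measure G - d < measure (M (diag_subseq n)) G"
      using H(3) by linarith
  qed
qed

lemma tendsto_integral_limit_measure:
  fixes g :: "'x \<Rightarrow> real"
  assumes "continuous_on UNIV g" "bounded (range g)"
  shows "(\<lambda>n. \<integral>x. g x \<partial>M (diag_subseq n)) \<longlonglongrightarrow> (\<integral>x. g x \<partial>limit_measure)"
  by (intro tendsto_integral_if_liminf_open[where M="\<lambda>n. M (diag_subseq n)"]
        M_prob limit_measure_prob eventually_measure_open_gt assms)

end

theorem prokhorov_subsequence:
  fixes M :: "nat \<Rightarrow> 'x::metric_space measure"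
  assumes M: "\<And>n. M n \<in> prob_measures borel"
    and tight: "\<And>e. 0 < e \<Longrightarrow> \<exists>K. compact K \<and> (\<forall>n. 1 - e \<le> measure (M n) K)"
  obtains r \<mu> where "strict_mono r" "\<mu> \<in> prob_measures borel"
    "\<And>g :: 'x \<Rightarrow> real. continuous_on UNIV g \<Longrightarrow> bounded (range g) \<Longrightarrow>
       (\<lambda>n. \<integral>x. g x \<partial>M (r n)) \<longlonglongrightarrow> (\<integral>x. g x \<partial>\<mu>)"
proof -
  have "\<forall>m::nat. \<exists>K. compact K \<and> (\<forall>n. 1 - 1 / Suc m \<le> measure (M n) K)"
    using tight by simp
  then obtain K0 where K0: "\<And>m. compact (K0 m)" "\<And>m n. 1 - 1 / Suc m \<le> measure (M n) (K0 m)"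
    by metis
  define K where "K m = (\<Union>i\<le>m. K0 i)" for m
  have K_compact: "compact (K m)" for m
    unfolding K_def using K0(1) by (intro compact_UN) auto
  have K_incseq: "incseq K"
    unfolding K_def incseq_def by (auto intro: order_trans)
  have K_measure: "1 - 1 / Suc m \<le> measure (M n) (K m)" for m n
  proof -
    have "measure (M n) (K0 m) \<le> measure (M n) (K m)"
      using M[of n] K_compact[of m] unfolding K_def
      by (intro finite_measure.finite_measure_mono) (auto simp: prob_measures_def prob_space_def compact_imp_closed)
    then show ?thesis
      using K0(2)[of m n] by linarith
  qed
  have "\<forall>m. \<exists>D. countable D \<and> D \<subseteq> K m \<and> (\<forall>x\<in>K m. \<forall>e>0. \<exists>d\<in>D. dist x d < e)"
    by (meson compact_imp_countable_dense[OF K_compact])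
  then obtain D where D: "\<And>m. countable (D m)" "\<And>m. D m \<subseteq> K m"
    "\<And>m x e. x \<in> K m \<Longrightarrow> 0 < e \<Longrightarrow> \<exists>d\<in>D m. dist x d < e"
    by metis
  interpret tight_prob_sequence M K D
    using M K_compact K_incseq K_measure D by unfold_locales
  show ?thesis
    using diag_subseq(1) limit_measure_prob tendsto_integral_limit_measure by (rule that)
qed

section \<open>Weak compactness of Delta_nu\<close>

lemma topspace_weak_topology: "topspace (weak_topology P) = P"
proof -
  have "P \<in> {{\<mu> \<in> P. (\<integral>x. g x \<partial>\<mu>) \<in> U} | g U. continuous_on UNIV g \<and> bounded (range g) \<and> open (U :: real set)}"
    by (rule CollectI, rule exI[of _ "\<lambda>_. 0 :: real"], rule exI[of _ UNIV]) auto
  then show ?thesis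
    unfolding weak_topology_def topology_generated_by_topspace by blast
qed

lemma topspace_WT: "topspace (WT \<nu>) = Delta_nu \<nu>"
  by (simp add: WT_def topspace_weak_topology)

lemma limitin_weak_topologyI:
  fixes \<mu>s :: "nat \<Rightarrow> 'x::topological_space measure"
  assumes \<mu>s: "\<And>n. \<mu>s n \<in> P" and \<mu>: "\<mu> \<in> P"
    and lim: "\<And>g :: 'x \<Rightarrow> real. continuous_on UNIV g \<Longrightarrow> bounded (range g) \<Longrightarrow>
                (\<lambda>n. \<integral>x. g x \<partial>\<mu>s n) \<longlonglongrightarrow> (\<integral>x. g x \<partial>\<mu>)"
  shows "limitin (weak_topology P) \<mu>s \<mu> sequentially"
  unfolding limitin_def topspace_weak_topology
proof (intro conjI allI impI)
  fix U assume "openin (weak_topology P) U \<and> \<mu> \<in> U"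
  then have "generate_topology_on {{\<mu> \<in> P. (\<integral>x. g x \<partial>\<mu>) \<in> U} | g U.
               continuous_on UNIV g \<and> bounded (range g) \<and> open (U :: real set)} U" "\<mu> \<in> U"
    unfolding weak_topology_def openin_topology_generated_by_iff by auto
  then show "eventually (\<lambda>n. \<mu>s n \<in> U) sequentially"
  proof (induction rule: generate_topology_on.induct)
    case (Int a b)
    then show ?case
      by (auto intro: eventually_conj)
  next
    case (UN K)
    then obtain k where "k \<in> K" "\<mu> \<in> k"
      by auto
    then have "eventually (\<lambda>n. \<mu>s n \<in> k) sequentially"
      using UN by auto
    then show ?case
      by (rule eventually_mono) (use \<open>k \<in> K\<close> in auto)
  next
    case (Basis s)
    then obtain g :: "'x \<Rightarrow> real" and V where s: "s = {\<mu> \<in> P. (\<integral>x. g x \<partial>\<mu>) \<in> V}"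
      "continuous_on UNIV g" "bounded (range g)" "open V"
      by auto
    then have "eventually (\<lambda>n. (\<integral>x. g x \<partial>\<mu>s n) \<in> V) sequentially"
      using Basis(2) by (intro topological_tendstoD[OF lim]) auto
    then show ?case
      by (rule eventually_mono) (use \<mu>s s(1) in auto)
  qed simp
qed (fact \<mu>)

lemma Delta_nuD:
  assumes "\<mu> \<in> Delta_nu \<nu>"
  shows "\<mu> \<in> prob_measures borel" "distr \<mu> borel fst = \<nu>"
  using assms unfolding Delta_nu_def by auto

lemma measurable_fst_borel:
  fixes \<mu> :: "('c::topological_space \<times> 'b::topological_space) measure"
  assumes "sets \<mu> = sets borel"
  shows "fst \<in> measurable \<mu> (borel :: 'c measure)"
proof -
  have "measurable \<mu> (borel :: 'c measure) = measurable borel borel"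
    using assms by (rule measurable_cong_sets) simp
  then show ?thesis
    by (simp add: borel_measurable_continuous_onI continuous_on_fst continuous_on_id)
qed

lemma integral_Delta_nu_fst:
  fixes h :: "'c::topological_space \<Rightarrow> real"
  assumes "\<mu> \<in> Delta_nu \<nu>" "h \<in> borel_measurable borel"
  shows "(\<integral>x. h x \<partial>\<nu>) = (\<integral>x. h (fst x) \<partial>\<mu>)"
proof -
  have "fst \<in> measurable \<mu> (borel :: 'c measure)"
    using Delta_nuD(1)[OF assms(1)] by (intro measurable_fst_borel) (simp add: prob_measures_def)
  then show ?thesis
    using Delta_nuD(2)[OF assms(1)] integral_distr[OF _ assms(2)] by metis
qed

lemma measure_Delta_nu_Times_UNIV:
  assumes "\<mu> \<in> Delta_nu \<nu>" "A \<in> sets borel"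
  shows "measure \<mu> (A \<times> UNIV) = measure \<nu> A"
proof -
  have \<mu>: "\<mu> \<in> prob_measures borel"
    using assms(1) by (rule Delta_nuD)
  then have "fst \<in> measurable \<mu> borel"
    by (intro measurable_fst_borel) (simp add: prob_measures_def)
  then have "measure \<nu> A = measure \<mu> (fst -` A \<inter> space \<mu>)"
    using Delta_nuD(2)[OF assms(1)] measure_distr[OF _ assms(2)] by metis
  then show ?thesis
    using space_prob_measures_borel[OF \<mu>] by (simp add: vimage_fst)
qed

lemma Delta_nu_tight:
  fixes \<nu> :: "'c::polish_space measure"
  assumes \<nu>: "prob_space \<nu>" "sets \<nu> = sets borel" and A: "compact (UNIV :: 'a::metric_space set)"
    and e: "0 < e"
  shows "\<exists>K. compact K \<and> (\<forall>\<mu>\<in>Delta_nu \<nu>. 1 - e \<le> measure \<mu> (K :: ('c \<times> 'a) set))"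
proof (cases "e < 1")
  case True
  have space_\<nu>: "space \<nu> = UNIV"
    using \<nu>(2) by (metis sets_eq_imp_space_eq space_borel)
  have "emeasure \<nu> UNIV = 1"
    using prob_space.emeasure_space_1[OF \<nu>(1)] space_\<nu> by simp
  moreover have "emeasure \<nu> UNIV = (SUP K \<in> {K. K \<subseteq> UNIV \<and> compact K}. emeasure \<nu> K)"
    using \<nu>(2) by (rule inner_regular) (auto simp: \<open>emeasure \<nu> UNIV = 1\<close> space_\<nu>)
  moreover have "ennreal (1 - e) < 1"
    using e True by (simp add: ennreal_lessI)
  ultimately have "ennreal (1 - e) < (SUP K \<in> {K. K \<subseteq> UNIV \<and> compact K}. emeasure \<nu> K)"
    by simp
  then obtain K where K: "compact K" "ennreal (1 - e) < emeasure \<nu> K"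
    unfolding less_SUP_iff by auto
  then have "1 - e < measure \<nu> K"
    using \<nu>(1) True
    by (simp add: prob_space_def finite_measure.emeasure_eq_measure ennreal_less_iff)
  moreover have "measure \<mu> (K \<times> (UNIV :: 'a set)) = measure \<nu> K" if "\<mu> \<in> Delta_nu \<nu>" for \<mu>
    using that K(1) by (intro measure_Delta_nu_Times_UNIV) (auto simp: compact_imp_closed)
  ultimately show ?thesis
    using compact_Times[OF K(1) A] by (intro exI[of _ "K \<times> UNIV"]) auto
qed (auto intro!: exI[of _ "{}"])

theorem seq_compact_space_WT:
  fixes \<nu> :: "'c::polish_space measure"
  assumes \<nu>: "prob_space \<nu>" "sets \<nu> = sets borel" and A: "compact (UNIV :: 'a::metric_space set)"
  shows "seq_compact_space (WT \<nu> :: ('c \<times> 'a) measure topology)"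
  unfolding seq_compact_space_def
proof (intro allI impI)
  fix \<sigma> :: "nat \<Rightarrow> ('c \<times> 'a) measure"
  assume "range \<sigma> \<subseteq> topspace (WT \<nu>)"
  then have \<sigma>: "\<sigma> n \<in> Delta_nu \<nu>" for n
    by (auto simp: topspace_WT)
  have tight: "\<And>e. 0 < e \<Longrightarrow> \<exists>K. compact K \<and> (\<forall>n. 1 - e \<le> measure (\<sigma> n) K)"
  proof -
    fix e :: real assume "0 < e"
    obtain K :: "('c \<times> 'a) set" where "compact K" "\<forall>\<mu>\<in>Delta_nu \<nu>. 1 - e \<le> measure \<mu> K"
      using Delta_nu_tight[OF \<nu> A \<open>0 < e\<close>] by auto
    then show "\<exists>K. compact K \<and> (\<forall>n. 1 - e \<le> measure (\<sigma> n) K)"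
      using \<sigma> by auto
  qed
  obtain r \<mu> where r: "strict_mono r" and \<mu>: "\<mu> \<in> prob_measures borel"
    and lim: "\<And>g :: 'c \<times> 'a \<Rightarrow> real. continuous_on UNIV g \<Longrightarrow> bounded (range g) \<Longrightarrow>
                (\<lambda>n. \<integral>x. g x \<partial>\<sigma> (r n)) \<longlonglongrightarrow> (\<integral>x. g x \<partial>\<mu>)"
    by (rule prokhorov_subsequence[of \<sigma>, OF Delta_nuD(1)[OF \<sigma>] tight]) (assumption, rule that)
  have fst_meas: "fst \<in> measurable \<mu> (borel :: 'c measure)"
    using \<mu> by (intro measurable_fst_borel) (simp add: prob_measures_def)
  have "distr \<mu> borel fst = \<nu>"
  proof (rule measure_eqI_bounded_continuous)
    show "finite_measure (distr \<mu> borel fst)"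
      using prob_space.prob_space_distr[OF _ fst_meas] \<mu> by (simp add: prob_measures_def prob_space_def)
    show "finite_measure \<nu>"
      using \<nu>(1) by (simp add: prob_space_def)
    fix h :: "'c \<Rightarrow> real" assume h: "continuous_on UNIV h" "bounded (range h)"
    have h_meas: "h \<in> borel_measurable borel"
      using h(1) by (rule borel_measurable_continuous_onI)
    have "(\<lambda>n. \<integral>x. h (fst x) \<partial>\<sigma> (r n)) \<longlonglongrightarrow> (\<integral>x. h (fst x) \<partial>\<mu>)"
      using h by (intro lim continuous_on_compose2[OF h(1)] continuous_intros bounded_subset[OF h(2)]) auto
    moreover have "(\<integral>x. h (fst x) \<partial>\<sigma> (r n)) = (\<integral>x. h x \<partial>\<nu>)" for n
      using integral_Delta_nu_fst[OF \<sigma> h_meas] by simp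
    ultimately have "(\<lambda>n. \<integral>x. h x \<partial>\<nu>) \<longlonglongrightarrow> (\<integral>x. h (fst x) \<partial>\<mu>)"
      by simp
    then have "(\<integral>x. h (fst x) \<partial>\<mu>) = (\<integral>x. h x \<partial>\<nu>)"
      by (simp add: LIMSEQ_const_iff)
    then show "(\<integral>x. h x \<partial>distr \<mu> borel fst) = (\<integral>x. h x \<partial>\<nu>)"
      by (simp add: integral_distr[OF fst_meas h_meas])
  qed (simp_all add: \<nu>(2))
  then have "\<mu> \<in> Delta_nu \<nu>"
    using \<mu> by (simp add: Delta_nu_def)
  moreover have "limitin (WT \<nu>) (\<sigma> \<circ> r) \<mu> sequentially"
    unfolding WT_def using \<sigma> \<open>\<mu> \<in> Delta_nu \<nu>\<close> lim by (intro limitin_weak_topologyI) (auto simp: o_def)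
  ultimately show "\<exists>l r. l \<in> topspace (WT \<nu>) \<and> strict_mono r \<and> limitin (WT \<nu>) (\<sigma> \<circ> r) l sequentially"
    using r by (intro exI[of _ \<mu>] exI[of _ r]) (simp add: topspace_WT)
qed

section \<open>Integrated payoffs\<close>

lemma space_borel_of: "space (borel_of X) = topspace X"
  by (simp add: borel_of_def space_measure_of_conv)

lemma borel_measurable_borel_of:
  assumes "continuous_map X euclidean f"
  shows "f \<in> borel_measurable (borel_of X)"
  unfolding borel_def borel_of_def
proof (rule measurable_measure_of)
  fix U :: "'b set"
  assume "U \<in> {S. open S}"
  then have "openin X {x \<in> topspace X. f x \<in> U}"
    using openin_continuous_map_preimage[OF assms] by auto
  then show "f -` U \<inter> space (sigma (topspace X) {U. openin X U}) \<in> sets (sigma (topspace X) {U. openin X U})"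
    using openin_subset
    by (subst sets_measure_of) (auto intro!: sigma_sets.Basic simp: space_measure_of_conv Int_commute Collect_conj_eq vimage_def)
qed (auto simp: space_measure_of_conv)

lemma integrable_borel_of:
  fixes f :: "'a \<Rightarrow> real"
  assumes X: "seq_compact_space X" and f: "continuous_map X euclideanreal f"
    and \<kappa>: "\<kappa> \<in> prob_measures (borel_of X)"
  shows "integrable \<kappa> f"
proof -
  interpret prob_space \<kappa>
    using \<kappa> by (simp add: prob_measures_def)
  obtain B where B: "\<forall>x\<in>topspace X. \<bar>f x\<bar> \<le> B"
    using seq_compact_space_imp_bounded[OF X f] by (auto simp: bounded_iff)
  have sets: "sets \<kappa> = sets (borel_of X)"
    using \<kappa> by (simp add: prob_measures_def)
  then have "f \<in> borel_measurable \<kappa>"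
    using borel_measurable_borel_of[OF f] measurable_cong_sets[OF sets refl] by simp
  moreover have "AE x in \<kappa>. norm (f x) \<le> B"
    using B sets_eq_imp_space_eq[OF sets] by (intro AE_I2) (simp add: space_borel_of)
  ultimately show ?thesis
    by (intro integrable_const_bound)
qed

lemma stoch_ge_borel_ofD:
  fixes g :: "'a \<Rightarrow> real"
  assumes "stoch_ge (borel_of X) R \<kappa> \<kappa>'" and X: "seq_compact_space X"
    and g: "continuous_map X euclideanreal g"
    and mono: "\<And>x y. x \<in> topspace X \<Longrightarrow> y \<in> topspace X \<Longrightarrow> R x y \<Longrightarrow> g y \<le> g x"
  shows "(\<integral>x. g x \<partial>\<kappa>') \<le> (\<integral>x. g x \<partial>\<kappa>)"
proof -
  have "bounded (g ` space (borel_of X))"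
    using seq_compact_space_imp_bounded[OF X g] by (simp add: space_borel_of)
  moreover have "g \<in> borel_measurable (borel_of X)"
    using g by (rule borel_measurable_borel_of)
  moreover have "g \<in> borel_measurable (borel_of X) \<longrightarrow>
      bounded (g ` space (borel_of X)) \<and> (\<forall>x\<in>space (borel_of X). \<forall>y\<in>space (borel_of X). R x y \<longrightarrow> g y \<le> g x)
      \<longrightarrow> (\<integral>x. g x \<partial>\<kappa>') \<le> (\<integral>x. g x \<partial>\<kappa>)"
    using assms(1) unfolding stoch_ge_def by (rule spec)
  ultimately show ?thesis
    using mono by (simp add: space_borel_of)
qed

lemma Vint_supermodular:
  fixes v :: "'c \<Rightarrow> 'a::lattice \<Rightarrow> 's \<Rightarrow> 'm \<Rightarrow> real"
  assumes X: "seq_compact_space X" and cont: "\<And>a. continuous_map X euclideanreal (\<lambda>p. v c a (fst p) (snd p))"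
    and \<kappa>: "\<kappa> \<in> prob_measures (borel_of X)"
    and supermod: "\<And>p. p \<in> topspace X \<Longrightarrow>
      v c a (fst p) (snd p) + v c a' (fst p) (snd p) \<le> v c (sup a a') (fst p) (snd p) + v c (inf a a') (fst p) (snd p)"
  shows "Vint v c a \<kappa> + Vint v c a' \<kappa> \<le> Vint v c (sup a a') \<kappa> + Vint v c (inf a a') \<kappa>"
proof -
  have integrable: "integrable \<kappa> (\<lambda>p. v c b (fst p) (snd p))" for b
    using X cont \<kappa> by (rule integrable_borel_of)
  have "sets \<kappa> = sets (borel_of X)"
    using \<kappa> by (simp add: prob_measures_def)
  then have "space \<kappa> = topspace X"
    by (metis sets_eq_imp_space_eq space_borel_of)
  then have "(\<integral>p. v c a (fst p) (snd p) + v c a' (fst p) (snd p) \<partial>\<kappa>)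
           \<le> (\<integral>p. v c (sup a a') (fst p) (snd p) + v c (inf a a') (fst p) (snd p) \<partial>\<kappa>)"
    using supermod by (intro integral_mono Bochner_Integration.integrable_add integrable) auto
  then show ?thesis
    by (simp add: Vint_def integrable)
qed

lemma Vint_increasing_differences:
  fixes v :: "'c \<Rightarrow> 'a \<Rightarrow> 's \<Rightarrow> 'm \<Rightarrow> real"
  assumes X: "seq_compact_space X" and cont: "\<And>a. continuous_map X euclideanreal (\<lambda>p. v c a (fst p) (snd p))"
    and \<kappa>: "\<kappa> \<in> prob_measures (borel_of X)" "\<kappa>' \<in> prob_measures (borel_of X)"
    and stoch: "stoch_ge (borel_of X) R \<kappa> \<kappa>'"
    and incdiff: "\<And>p q. p \<in> topspace X \<Longrightarrow> q \<in> topspace X \<Longrightarrow> R p q \<Longrightarrow>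
      v c a (fst q) (snd q) - v c a' (fst q) (snd q) \<le> v c a (fst p) (snd p) - v c a' (fst p) (snd p)"
  shows "Vint v c a \<kappa>' - Vint v c a' \<kappa>' \<le> Vint v c a \<kappa> - Vint v c a' \<kappa>"
proof -
  have "(\<integral>p. v c a (fst p) (snd p) - v c a' (fst p) (snd p) \<partial>\<kappa>')
      \<le> (\<integral>p. v c a (fst p) (snd p) - v c a' (fst p) (snd p) \<partial>\<kappa>)"
    using stoch X continuous_map_diff[OF cont cont] incdiff by (rule stoch_ge_borel_ofD)
  then show ?thesis
    using integrable_borel_of[OF X cont] \<kappa> by (simp add: Vint_def)
qed

theorem lemma5:
  fixes \<nu> :: "'c::polish_space measure"
    and v :: "'c \<Rightarrow> 'a::{metric_space,lattice} \<Rightarrow> 's::metric_space \<Rightarrow> ('c \<times> 'a) measure \<Rightarrow> real"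
  assumes nu: "prob_space \<nu>" "sets \<nu> = sets borel"
    and A_compact: "compact (UNIV :: 'a set)"
    and sup_cont: "continuous_on UNIV (\<lambda>p :: 'a \<times> 'a. sup (fst p) (snd p))"
    and inf_cont: "continuous_on UNIV (\<lambda>p :: 'a \<times> 'a. inf (fst p) (snd p))"
    and S_compact: "compact (UNIV :: 's set)"
    and v_cont: "continuous_map
                   (prod_topology euclidean (prod_topology euclidean (prod_topology euclidean (WT \<nu>))))
                   euclideanreal (\<lambda>(c, a, s, \<mu>). v c a s \<mu>)"
    and v_supermod: "\<And>c a a' s \<mu>. \<mu> \<in> Delta_nu \<nu> \<Longrightarrow>
                        v c (sup a a') s \<mu> + v c (inf a a') s \<mu> \<ge> v c a s \<mu> + v c a' s \<mu>"
    and v_incdiff: "\<And>c a a' s \<mu> \<mu>'. a' \<le> a \<Longrightarrow> \<mu> \<in> Delta_nu \<nu> \<Longrightarrow> \<mu>' \<in> Delta_nu \<nu> \<Longrightarrow>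
                        stoch_ge borel ca_ge \<mu> \<mu>' \<Longrightarrow>
                        v c a s \<mu> - v c a' s \<mu> \<ge> v c a s \<mu>' - v c a' s \<mu>'"
  shows "(\<forall>c a a' \<kappa>. \<kappa> \<in> prob_measures (MS \<nu>) \<longrightarrow>
             Vint v c (sup a a') \<kappa> + Vint v c (inf a a') \<kappa> \<ge> Vint v c a \<kappa> + Vint v c a' \<kappa>)
       \<and> (\<forall>c a a' \<kappa> \<kappa>'. a' \<le> a \<and> \<kappa> \<in> prob_measures (MS \<nu>) \<and> \<kappa>' \<in> prob_measures (MS \<nu>) \<and>
             stoch_ge (MS \<nu>) sm_ge \<kappa> \<kappa>' \<longrightarrow>
             Vint v c a \<kappa> - Vint v c a' \<kappa> \<ge> Vint v c a \<kappa>' - Vint v c a' \<kappa>')"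
proof -
  let ?X = "prod_topology (euclidean :: 's topology) (WT \<nu> :: ('c \<times> 'a) measure topology)"
  have X: "seq_compact_space ?X"
    using seq_compact_space_euclidean[OF S_compact] seq_compact_space_WT[OF nu A_compact]
    by (rule seq_compact_space_prod_topology)
  have cont: "continuous_map ?X euclideanreal (\<lambda>p. v c a (fst p) (snd p))" for c a
    using continuous_map_compose[OF _ v_cont, of ?X "\<lambda>p. (c, a, p)"]
    by (simp add: o_def case_prod_beta continuous_map_pairedI)
  show ?thesis
  proof (intro conjI allI impI)
    fix c :: 'c and a a' :: 'a and \<kappa> :: "('s \<times> ('c \<times> 'a) measure) measure"
    assume "\<kappa> \<in> prob_measures (MS \<nu>)"
    with X cont show "Vint v c a \<kappa> + Vint v c a' \<kappa> \<le> Vint v c (sup a a') \<kappa> + Vint v c (inf a a') \<kappa>"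
      unfolding MS_def by (rule Vint_supermodular) (auto simp: topspace_WT intro: v_supermod)
  next
    fix c :: 'c and a a' :: 'a and \<kappa> \<kappa>' :: "('s \<times> ('c \<times> 'a) measure) measure"
    assume "a' \<le> a \<and> \<kappa> \<in> prob_measures (MS \<nu>) \<and> \<kappa>' \<in> prob_measures (MS \<nu>) \<and> stoch_ge (MS \<nu>) sm_ge \<kappa> \<kappa>'"
    with X cont show "Vint v c a \<kappa>' - Vint v c a' \<kappa>' \<le> Vint v c a \<kappa> - Vint v c a' \<kappa>"
      unfolding MS_def by (intro Vint_increasing_differences[where R=sm_ge]) (auto simp: topspace_WT sm_ge_def intro: v_incdiff)
  qed
qed

end
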